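(* There exist a single-item 2-bidder interdependent-values setting whose valuation profile is $c$-single-crossing for some constant $c\ge1$, and a signal profile $\mathbf s$, such that neither the second-price auction for interdependent values nor the generalized Vickrey auction admits a pure Nash equilibrium at $\mathbf s$ under the no-overbidding assumption.
   Context: Single-item interdependent-values setting: bidders have private signals $s_i\in S_i\subseteq\mathbb R_{\ge0}$ and publicly known valuations $v_i(\mathbf s)$, weakly increasing in every coordinate and strictly increasing in $s_i$. $c$-single-crossing ($c\ge1$): for all $i,i'$, $\mathbf s$, $\delta\ge0$, $c\,(v_i(s_i+\delta,\mathbf s_{-i})-v_i(\mathbf s))\ge v_{i'}(s_i+\delta,\mathbf s_{-i})-v_{i'}(\mathbf s)$. Both auctions solicit bids (reported signals) $\mathbf b$ and allocate the item to a bidder with highest $v_i(\mathbf b)$; losers pay nothing. Second-price auction: the winner pays the second-highest value $\max_{j\ne w}v_j(\mathbf b)$. Generalized Vickrey auction: the winner $w$ pays $v_w(b_w^*,\mathbf b_{-w})$, where the critical bid $b_w^*=\min\{b_w: x_w(b_w,\mathbf b_{-w})=1\}$. Utility $u_i(\mathbf b;\mathbf s)=x_i(\mathbf b)v_i(\mathbf s)-p_i(\mathbf b)$. A pure Nash equilibrium at $\mathbf s$ under no-overbidding is a bid profile $\mathbf b\le\mathbf s$ such that no bidder $i$ has $b_i'\le s_i$ with $u_i((b_i',\mathbf b_{-i});\mathbf s)>u_i(\mathbf b;\mathbf s)$. *)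

theory Defs
  imports Complex_Main "HOL-Library.Numeral_Type"
begin

text \<open>Bidders are the elements of a finite type 'i; a (signal or bid) profile is a
  function 'i => real. S i is the signal space of bidder i, v i s the value of bidder i
  at signal profile s.\<close>

definition profiles :: "('i \<Rightarrow> real set) \<Rightarrow> ('i \<Rightarrow> real) set" where
  "profiles S = {s. \<forall>i. s i \<in> S i}"

definition iv_setting :: "('i \<Rightarrow> real set) \<Rightarrow> ('i \<Rightarrow> ('i \<Rightarrow> real) \<Rightarrow> real) \<Rightarrow> bool" where
  "iv_setting S v \<longleftrightarrow>
     (\<forall>i. S i \<noteq> {} \<and> S i \<subseteq> {0..}) \<and>
     (\<forall>i j s t. s \<in> profiles S \<and> t \<in> S j \<and> s j \<le> t \<longrightarrow> v i s \<le> v i (s(j := t))) \<and>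
     (\<forall>i s t. s \<in> profiles S \<and> t \<in> S i \<and> s i < t \<longrightarrow> v i s < v i (s(i := t)))"

definition single_crossing ::
  "('i \<Rightarrow> real set) \<Rightarrow> ('i \<Rightarrow> ('i \<Rightarrow> real) \<Rightarrow> real) \<Rightarrow> real \<Rightarrow> bool" where
  "single_crossing S v c \<longleftrightarrow>
     (\<forall>i i' s \<delta>. s \<in> profiles S \<and> \<delta> \<ge> 0 \<and> s i + \<delta> \<in> S i \<longrightarrow>
        c * (v i (s(i := s i + \<delta>)) - v i s) \<ge> v i' (s(i := s i + \<delta>)) - v i' s)"

definition highest_value_alloc ::
  "('i \<Rightarrow> real set) \<Rightarrow> ('i \<Rightarrow> ('i \<Rightarrow> real) \<Rightarrow> real) \<Rightarrow> (('i \<Rightarrow> real) \<Rightarrow> 'i) \<Rightarrow> bool" where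
  "highest_value_alloc S v x \<longleftrightarrow> (\<forall>b \<in> profiles S. \<forall>j. v j b \<le> v (x b) b)"

definition spa_utility ::
  "('i \<Rightarrow> ('i \<Rightarrow> real) \<Rightarrow> real) \<Rightarrow> (('i \<Rightarrow> real) \<Rightarrow> 'i) \<Rightarrow> 'i \<Rightarrow> ('i \<Rightarrow> real) \<Rightarrow> ('i \<Rightarrow> real) \<Rightarrow> real" where
  "spa_utility v x i b s =
     (if x b = i then v i s - Max ((\<lambda>j. v j b) ` (UNIV - {i})) else 0)"

definition critical_bid ::
  "('i \<Rightarrow> real set) \<Rightarrow> (('i \<Rightarrow> real) \<Rightarrow> 'i) \<Rightarrow> 'i \<Rightarrow> ('i \<Rightarrow> real) \<Rightarrow> real" where
  "critical_bid S x w b = (LEAST t. t \<in> S w \<and> x (b(w := t)) = w)"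

definition gva_utility ::
  "('i \<Rightarrow> real set) \<Rightarrow> ('i \<Rightarrow> ('i \<Rightarrow> real) \<Rightarrow> real) \<Rightarrow> (('i \<Rightarrow> real) \<Rightarrow> 'i) \<Rightarrow> 'i \<Rightarrow> ('i \<Rightarrow> real) \<Rightarrow> ('i \<Rightarrow> real) \<Rightarrow> real" where
  "gva_utility S v x i b s =
     (if x b = i then v i s - v i (b(i := critical_bid S x i b)) else 0)"

definition pure_NE_no_overbidding ::
  "('i \<Rightarrow> real set) \<Rightarrow> ('i \<Rightarrow> ('i \<Rightarrow> real) \<Rightarrow> ('i \<Rightarrow> real) \<Rightarrow> real) \<Rightarrow> ('i \<Rightarrow> real) \<Rightarrow> ('i \<Rightarrow> real) \<Rightarrow> bool" where
  "pure_NE_no_overbidding S u s b \<longleftrightarrow>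
     b \<in> profiles S \<and> (\<forall>i. b i \<le> s i) \<and>
     (\<forall>i b'. b' \<in> S i \<and> b' \<le> s i \<longrightarrow> \<not> (u i (b(i := b')) s > u i b s))"

end

theory Submission
  imports Defs
begin

text \<open>Call a deviation of a losing bidder i a cheap takeover if it respects no-overbidding, makes
  i the winner, and leaves i's value at the new reported profile strictly below his true value.
  Losers pay nothing in both auctions, and the winner pays at most his value at the reported
  profile: in the second-price auction because that value is the highest one, in the generalized
  Vickrey auction because the critical bid is at most his bid. Hence a cheap takeover is a
  profitable deviation. In the two-bidder example below, with true signals (1, 2), every bid
  profile admits a cheap takeover, so neither auction has a pure equilibrium.\<close>

lemma num2_cases: "(i::2) = 0 \<or> i = 1"
proof (cases i)
  case (of_int z)
  then have "z = 0 \<or> z = 1" by auto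
  with of_int show ?thesis by auto
qed

definition charges_winner_at_most_reported_value ::
  "('i \<Rightarrow> real set) \<Rightarrow> ('i \<Rightarrow> ('i \<Rightarrow> real) \<Rightarrow> real) \<Rightarrow> (('i \<Rightarrow> real) \<Rightarrow> 'i)
    \<Rightarrow> ('i \<Rightarrow> ('i \<Rightarrow> real) \<Rightarrow> ('i \<Rightarrow> real) \<Rightarrow> real) \<Rightarrow> bool" where
  "charges_winner_at_most_reported_value S v x u \<longleftrightarrow>
     (\<forall>i b s. b \<in> profiles S \<longrightarrow>
        (x b \<noteq> i \<longrightarrow> u i b s = 0) \<and> (x b = i \<longrightarrow> v i s - v i b \<le> u i b s))"

definition cheap_takeover ::
  "('i \<Rightarrow> real set) \<Rightarrow> ('i \<Rightarrow> ('i \<Rightarrow> real) \<Rightarrow> real) \<Rightarrow> (('i \<Rightarrow> real) \<Rightarrow> 'i)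
    \<Rightarrow> ('i \<Rightarrow> real) \<Rightarrow> ('i \<Rightarrow> real) \<Rightarrow> bool" where
  "cheap_takeover S v x s b \<longleftrightarrow>
     (\<exists>i t. t \<in> S i \<and> t \<le> s i \<and> x b \<noteq> i \<and> x (b(i := t)) = i \<and> v i (b(i := t)) < v i s)"

lemma not_pure_NE_if_cheap_takeover:
  assumes "charges_winner_at_most_reported_value S v x u" "cheap_takeover S v x s b"
  shows "\<not> pure_NE_no_overbidding S u s b"
proof
  assume NE: "pure_NE_no_overbidding S u s b"
  obtain i t where t: "t \<in> S i" "t \<le> s i" and "x b \<noteq> i" "x (b(i := t)) = i"
    and cheap: "v i (b(i := t)) < v i s"
    using assms(2) unfolding cheap_takeover_def by blast
  have "b \<in> profiles S" "b(i := t) \<in> profiles S"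
    using NE t(1) by (auto simp: pure_NE_no_overbidding_def profiles_def)
  then have "u i b s = 0" "v i s - v i (b(i := t)) \<le> u i (b(i := t)) s"
    using assms(1) \<open>x b \<noteq> i\<close> \<open>x (b(i := t)) = i\<close>
    unfolding charges_winner_at_most_reported_value_def by blast+
  with cheap have "u i b s < u i (b(i := t)) s"
    by linarith
  with NE t show False
    unfolding pure_NE_no_overbidding_def by blast
qed

lemma spa_charges_winner_at_most_reported_value:
  fixes x :: "('i::finite \<Rightarrow> real) \<Rightarrow> 'i"
  assumes "highest_value_alloc S v x" "\<And>i::'i. \<exists>j. j \<noteq> i"
  shows "charges_winner_at_most_reported_value S v x (spa_utility v x)"
  unfolding charges_winner_at_most_reported_value_def
proof (intro allI impI conjI)
  fix i :: 'i and b s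
  assume "b \<in> profiles S"
  show "x b \<noteq> i \<Longrightarrow> spa_utility v x i b s = 0"
    by (simp add: spa_utility_def)
  assume "x b = i"
  have "UNIV - {i} \<noteq> {}"
    using assms(2)[of i] by blast
  with assms(1) \<open>b \<in> profiles S\<close> \<open>x b = i\<close> have "Max ((\<lambda>j. v j b) ` (UNIV - {i})) \<le> v i b"
    by (auto simp: highest_value_alloc_def intro!: Max.boundedI)
  with \<open>x b = i\<close> show "v i s - v i b \<le> spa_utility v x i b s"
    by (simp add: spa_utility_def)
qed

lemma critical_bid_le:
  assumes "finite (S w)" "b w \<in> S w" "x b = w"
  shows "critical_bid S x w b \<in> S w" "critical_bid S x w b \<le> b w"
proof -
  let ?T = "{t. t \<in> S w \<and> x (b(w := t)) = w}"
  have "finite ?T" "b w \<in> ?T"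
    using assms by auto
  then have "critical_bid S x w b = Min ?T"
    unfolding critical_bid_def by (blast intro: Least_Min)
  moreover have "Min ?T \<in> ?T"
    using \<open>finite ?T\<close> \<open>b w \<in> ?T\<close> by (intro Min_in) auto
  moreover have "Min ?T \<le> b w"
    using \<open>finite ?T\<close> \<open>b w \<in> ?T\<close> by (rule Min_le)
  ultimately show "critical_bid S x w b \<in> S w" "critical_bid S x w b \<le> b w"
    by auto
qed

lemma gva_charges_winner_at_most_reported_value:
  assumes "iv_setting S v" "\<And>i. finite (S i)"
  shows "charges_winner_at_most_reported_value S v x (gva_utility S v x)"
  unfolding charges_winner_at_most_reported_value_def
proof (intro allI impI conjI)
  fix i b s
  assume b: "b \<in> profiles S"
  show "x b \<noteq> i \<Longrightarrow> gva_utility S v x i b s = 0"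
    by (simp add: gva_utility_def)
  assume "x b = i"
  let ?c = "critical_bid S x i b"
  have "b i \<in> S i"
    using b by (simp add: profiles_def)
  note c = critical_bid_le[of S i b x, OF assms(2) this \<open>x b = i\<close>]
  with b have "b(i := ?c) \<in> profiles S"
    by (auto simp: profiles_def)
  with assms(1) c \<open>b i \<in> S i\<close> have "v i (b(i := ?c)) \<le> v i (b(i := ?c, i := b i))"
    unfolding iv_setting_def by (metis fun_upd_same)
  with \<open>x b = i\<close> show "v i s - v i b \<le> gva_utility S v x i b s"
    by (simp add: gva_utility_def)
qed

definition ex_signals :: "2 \<Rightarrow> real set" where
  "ex_signals i = (if i = 0 then {0, 1} else {0, 1, 2})"

text \<open>Bidder 0 has the higher value at the profiles (0,0), (0,2), (1,1), (1,2) and bidder 1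
  at (0,1), (1,0); there are no ties.\<close>
definition ex_value :: "2 \<Rightarrow> (2 \<Rightarrow> real) \<Rightarrow> real" where
  "ex_value i b =
     (if i = 0 then
        (if b 0 = 0 then (if b 1 = 0 then 1 else if b 1 = 1 then 3 else 6)
         else (if b 1 = 0 then 2 else if b 1 = 1 then 5 else 8))
      else
        (if b 0 = 0 then (if b 1 = 0 then 0 else if b 1 = 1 then 4 else 5)
         else (if b 1 = 0 then 3 else if b 1 = 1 then 4 else 7)))"

definition ex_truth :: "2 \<Rightarrow> real" where
  "ex_truth i = (if i = 0 then 1 else 2)"

lemma ex_profiles_iff:
  "b \<in> profiles ex_signals \<longleftrightarrow> (b 0 = 0 \<or> b 0 = 1) \<and> (b 1 = 0 \<or> b 1 = 1 \<or> b 1 = 2)"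
  unfolding profiles_def ex_signals_def using num2_cases by auto

lemma ex_iv_setting: "iv_setting ex_signals ex_value"
  unfolding iv_setting_def
proof (intro conjI allI impI)
  fix i
  show "ex_signals i \<noteq> {}" "ex_signals i \<subseteq> {0..}"
    by (auto simp: ex_signals_def)
next
  fix i j s t
  assume "s \<in> profiles ex_signals \<and> t \<in> ex_signals j \<and> s j \<le> t"
  then show "ex_value i s \<le> ex_value i (s(j := t))"
    using num2_cases[of i] num2_cases[of j] unfolding ex_profiles_iff
    by (auto simp: ex_signals_def ex_value_def)
next
  fix i s t
  assume "s \<in> profiles ex_signals \<and> t \<in> ex_signals i \<and> s i < t"
  then show "ex_value i s < ex_value i (s(i := t))"
    using num2_cases[of i] unfolding ex_profiles_iff
    by (auto simp: ex_signals_def ex_value_def)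
qed

lemma ex_single_crossing: "single_crossing ex_signals ex_value 4"
proof -
  have "ex_value i' (s(i := t)) - ex_value i' s \<le> 4 * (ex_value i (s(i := t)) - ex_value i s)"
    if "s \<in> profiles ex_signals" "t \<in> ex_signals i" "s i \<le> t" for s i i' t
    using that num2_cases[of i] num2_cases[of i'] unfolding ex_profiles_iff
    by (auto simp: ex_signals_def ex_value_def)
  then show ?thesis
    unfolding single_crossing_def by simp
qed

lemma ex_winner:
  assumes "highest_value_alloc ex_signals ex_value x" "b \<in> profiles ex_signals"
  shows "x b = (if ex_value 1 b < ex_value 0 b then 0 else 1)"
proof -
  have "ex_value 0 b \<le> ex_value (x b) b" "ex_value 1 b \<le> ex_value (x b) b"
    using assms unfolding highest_value_alloc_def by blast+
  moreover have "ex_value 1 b \<noteq> ex_value 0 b"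
    using assms(2) unfolding ex_profiles_iff by (auto simp: ex_value_def)
  ultimately show ?thesis
    using num2_cases[of "x b"] by auto
qed

lemma ex_cheap_takeover:
  assumes "highest_value_alloc ex_signals ex_value x" "b \<in> profiles ex_signals"
  shows "cheap_takeover ex_signals ex_value x ex_truth b"
proof -
  let ?i = "if ex_value 1 b < ex_value 0 b then 1 else 0 :: 2"
  \<comment> \<open>The loser takes over by bidding 1 - b 0: bidder 0 flips his own bid, bidder 1 bids 1
    exactly when bidder 0 bids 0.\<close>
  have "1 - b 0 \<in> ex_signals ?i \<and> 1 - b 0 \<le> ex_truth ?i \<and> x b \<noteq> ?i \<and>
    x (b(?i := 1 - b 0)) = ?i \<and> ex_value ?i (b(?i := 1 - b 0)) < ex_value ?i ex_truth"
    using assms(2) unfolding ex_profiles_iff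
    by (elim conjE disjE)
      (simp_all add: ex_winner[OF assms(1), unfolded ex_profiles_iff]
        ex_signals_def ex_truth_def ex_value_def)
  then show ?thesis
    unfolding cheap_takeover_def by blast
qed

theorem mainTheorem4:
  shows "\<exists>(S :: 2 \<Rightarrow> real set) (v :: 2 \<Rightarrow> (2 \<Rightarrow> real) \<Rightarrow> real) (c :: real) (s :: 2 \<Rightarrow> real).
           iv_setting S v \<and> c \<ge> 1 \<and> single_crossing S v c \<and> s \<in> profiles S \<and>
           (\<forall>x. highest_value_alloc S v x \<longrightarrow>
              \<not> (\<exists>b. pure_NE_no_overbidding S (spa_utility v x) s b) \<and>
              \<not> (\<exists>b. pure_NE_no_overbidding S (gva_utility S v x) s b))"
proof (intro exI conjI allI impI)
  show "iv_setting ex_signals ex_value" "single_crossing ex_signals ex_value 4"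
    by (fact ex_iv_setting ex_single_crossing)+
  show "(1::real) \<le> 4" by simp
  show "ex_truth \<in> profiles ex_signals"
    by (simp add: ex_profiles_iff ex_truth_def)
next
  fix x
  assume x: "highest_value_alloc ex_signals ex_value x"
  have no_NE: "\<not> (\<exists>b. pure_NE_no_overbidding ex_signals u ex_truth b)"
    if "charges_winner_at_most_reported_value ex_signals ex_value x u" for u
    using not_pure_NE_if_cheap_takeover[OF that] ex_cheap_takeover[OF x]
    by (auto simp: pure_NE_no_overbidding_def)
  have "\<exists>j. j \<noteq> (i::2)" for i
    using num2_cases zero_neq_one by metis
  then show "\<not> (\<exists>b. pure_NE_no_overbidding ex_signals (spa_utility ex_value x) ex_truth b)"
    by (intro no_NE spa_charges_winner_at_most_reported_value x)
  show "\<not> (\<exists>b. pure_NE_no_overbidding ex_signals (gva_utility ex_signals ex_value x) ex_truth b)"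
    by (intro no_NE gva_charges_winner_at_most_reported_value ex_iv_setting)
      (simp add: ex_signals_def)
qed

end
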